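(* Consider the conservation law $\partial_t u+\partial_x f(u)=0$, $u\in\mathbb{R}^N$, on a uniform grid over $\mathbb{R}$ with cells $I_k=[x_{k-\frac12},x_{k+\frac12}]$ of width $h$ and midpoints $w_k$, time levels $0=t^0<t^1<\cdots$ with $\Delta t^n=t^{n+1}-t^n$, and the fully discrete scheme $$u_k^{n+1}=u_k^n+\frac{\Delta t^n}{h}\big(f^n_{k-\frac12}-f^n_{k+\frac12}\big),\qquad f^n_{k+\frac12}=\sum_{l,m\in Z}A_{lm}\,\varphi_{lm}(u^n_{k+l},u^n_{k+m}),$$ where $p\ge1$, $Z=\{-p+1,\dots,p\}$, $A=(A_{lm})_{l,m\in Z}$ is a fixed real matrix with $A_{ll}=0$ and $\sum_{l,m\in Z}A_{lm}=1$, and $(\varphi_{lm})$ is the family $\varphi_{01}(a,b)=\alpha g(a,b)+(1-\alpha)\hat h(a,b)$, $\varphi_{10}(a,b)=\alpha g(b,a)+(1-\alpha)\hat h(a,b)$, $\varphi_{lm}=\hat h$ otherwise, with $\alpha\in[0,1]$ and $\hat h$, $g$ consistent Lipschitz continuous two-point fluxes. Let $u_h^n$ be the piecewise constant function equal to $u_k^n$ on $I_k$, and let $B_k=\{x\in\mathbb{R}:|x-w_k|\le 2p\,h\}$. Assume $$h\sum_k\max_{x\in B_k}|u_h^n(x)-u_h^n(w_k)|\to0\quad\text{as }h\to0,\ \text{for all }n\ge0.$$ If $u_h$ converges uniformly almost everywhere to some function $u$ as $\Delta t,h\to0$, then $u$ is a weak solution of $\partial_t u+\partial_x f(u)=0$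.
   Context: A two-point flux $\hat h:\mathbb{R}^N\times\mathbb{R}^N\to\mathbb{R}^N$ is consistent if $\hat h(a,a)=f(a)$. In the paper $\hat h$ is an entropy conservative symmetric two-point flux and $g$ an entropy dissipative two-point flux (e.g. Godunov), combined with weight $\alpha$; the theorem only uses that each member of the family is consistent and Lipschitz continuous. *)

theory Defs
  imports "HOL-Analysis.Analysis"
begin

definition stencil :: "nat \<Rightarrow> int set" where
  "stencil p = {- int p + 1 .. int p}"

definition flux_family ::
  "real \<Rightarrow> ('v::real_vector \<Rightarrow> 'v \<Rightarrow> 'v) \<Rightarrow> ('v \<Rightarrow> 'v \<Rightarrow> 'v) \<Rightarrow> int \<Rightarrow> int \<Rightarrow> 'v \<Rightarrow> 'v \<Rightarrow> 'v" where
  "flux_family \<alpha> hh g l m a b =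
     (if l = 0 \<and> m = 1 then \<alpha> *\<^sub>R g a b + (1 - \<alpha>) *\<^sub>R hh a b
      else if l = 1 \<and> m = 0 then \<alpha> *\<^sub>R g b a + (1 - \<alpha>) *\<^sub>R hh a b
      else hh a b)"

text \<open>Numerical flux f_{k+1/2} computed from the grid values V.\<close>
definition num_flux ::
  "nat \<Rightarrow> (int \<Rightarrow> int \<Rightarrow> real) \<Rightarrow> real \<Rightarrow> ('v::real_vector \<Rightarrow> 'v \<Rightarrow> 'v) \<Rightarrow> ('v \<Rightarrow> 'v \<Rightarrow> 'v)
    \<Rightarrow> (int \<Rightarrow> 'v) \<Rightarrow> int \<Rightarrow> 'v" where
  "num_flux p A \<alpha> hh g V k =
     (\<Sum>l\<in>stencil p. \<Sum>m\<in>stencil p. A l m *\<^sub>R flux_family \<alpha> hh g l m (V (k + l)) (V (k + m)))"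

text \<open>Uniform grid of width h with midpoints w_k = c + k h; cell I_k = [w_k - h/2, w_k + h/2).\<close>
definition midpt :: "real \<Rightarrow> real \<Rightarrow> int \<Rightarrow> real" where
  "midpt h c k = c + of_int k * h"

definition cell_index :: "real \<Rightarrow> real \<Rightarrow> real \<Rightarrow> int" where
  "cell_index h c x = \<lfloor>(x - c) / h + 1 / 2\<rfloor>"

text \<open>Time level index n with t^n <= t < t^(n+1) (for t >= 0).\<close>
definition time_index :: "(nat \<Rightarrow> real) \<Rightarrow> real \<Rightarrow> nat" where
  "time_index ts t = (LEAST n. t < ts (Suc n))"

definition piecewise_const ::
  "real \<Rightarrow> real \<Rightarrow> (nat \<Rightarrow> real) \<Rightarrow> (nat \<Rightarrow> int \<Rightarrow> 'v) \<Rightarrow> real \<times> real \<Rightarrow> 'v" where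
  "piecewise_const h c ts U z = U (time_index ts (snd z)) (cell_index h c (fst z))"

definition local_osc ::
  "nat \<Rightarrow> real \<Rightarrow> real \<Rightarrow> (nat \<Rightarrow> real) \<Rightarrow> (nat \<Rightarrow> int \<Rightarrow> 'v::real_normed_vector) \<Rightarrow> nat \<Rightarrow> int \<Rightarrow> real" where
  "local_osc p h c ts U n k =
     Max ((\<lambda>x. norm (piecewise_const h c ts U (x, ts n) - piecewise_const h c ts U (midpt h c k, ts n)))
          ` {x. \<bar>x - midpt h c k\<bar> \<le> 2 * real p * h})"

text \<open>C^1 test function with compact support in R x (0,infinity); phx, pht are its partial
  derivatives in x and t.\<close>
definition test_function ::
  "(real \<times> real \<Rightarrow> real) \<Rightarrow> (real \<times> real \<Rightarrow> real) \<Rightarrow> (real \<times> real \<Rightarrow> real) \<Rightarrow> bool" where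
  "test_function \<phi> phx pht \<longleftrightarrow>
     (\<forall>x t. ((\<lambda>y. \<phi> (y, t)) has_real_derivative phx (x, t)) (at x)) \<and>
     (\<forall>x t. ((\<lambda>s. \<phi> (x, s)) has_real_derivative pht (x, t)) (at t)) \<and>
     continuous_on UNIV phx \<and> continuous_on UNIV pht \<and>
     (\<exists>R \<delta> T. 0 < \<delta> \<and> (\<forall>x t. \<phi> (x, t) \<noteq> 0 \<longrightarrow> \<bar>x\<bar> \<le> R \<and> \<delta> \<le> t \<and> t \<le> T))"

definition weak_solution :: "('v::euclidean_space \<Rightarrow> 'v) \<Rightarrow> (real \<times> real \<Rightarrow> 'v) \<Rightarrow> bool" where
  "weak_solution f u \<longleftrightarrow>
     (\<forall>\<phi> phx pht. test_function \<phi> phx pht \<longrightarrow>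
        integrable lebesgue (\<lambda>z. pht z *\<^sub>R u z + phx z *\<^sub>R f (u z)) \<and>
        integral\<^sup>L lebesgue (\<lambda>z. pht z *\<^sub>R u z + phx z *\<^sub>R f (u z)) = 0)"

end

theory Submission
  imports Defs
begin

text \<open>
  Fix a test function \<open>\<phi>\<close> and let \<open>G\<^sub>h\<close> be the function that on the space-time cell
  \<open>I\<^sub>k \<times> [t\<^sup>n, t\<^sup>n\<^sup>+\<^sup>1)\<close> equals \<open>\<phi>\<^sub>t(w\<^sub>k, t) u\<^sub>k\<^sup>n + \<phi>\<^sub>x(x + h/2, t\<^sup>n\<^sup>+\<^sup>1) f\<^sup>n\<^sub>k\<^sub>+\<^sub>1\<^sub>/\<^sub>2\<close>.
  Integrating cell by cell turns \<open>\<integral> G\<^sub>h\<close> into the scheme tested against the grid values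
  \<open>\<phi>(w\<^sub>k, t\<^sup>n)\<close> after summation by parts in space and in time, so \<open>\<integral> G\<^sub>h = 0\<close> exactly.
  As \<open>h \<rightarrow> 0\<close>, \<open>G\<^sub>h \<rightarrow> \<phi>\<^sub>t u + \<phi>\<^sub>x f(u)\<close> almost everywhere: every stencil value \<open>u\<^sub>k\<^sub>+\<^sub>l\<^sup>n\<close> seen
  from a point \<open>(x, t)\<close> tends to \<open>u(x, t)\<close>, and consistency and continuity of the two-point
  fluxes together with \<open>\<Sum> A\<^sub>l\<^sub>m = 1\<close> give \<open>f\<^sup>n\<^sub>k\<^sub>+\<^sub>1\<^sub>/\<^sub>2 \<rightarrow> f(u(x, t))\<close>. The \<open>G\<^sub>h\<close> are eventually bounded
  and supported in a fixed compact set, so dominated convergence gives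
  \<open>\<integral> \<phi>\<^sub>t u + \<phi>\<^sub>x f(u) = 0\<close>.
\<close>

section \<open>Grid cells and time levels\<close>

lemma cell_index_eq_iff:
  assumes "h > 0"
  shows "cell_index h c x = k \<longleftrightarrow> midpt h c k - h/2 \<le> x \<and> x < midpt h c k + h/2"
proof -
  have "cell_index h c x = k \<longleftrightarrow> of_int k \<le> (x - c) / h + 1/2 \<and> (x - c) / h + 1/2 < of_int k + 1"
    unfolding cell_index_def by (simp add: floor_eq_iff)
  also have "\<dots> \<longleftrightarrow> midpt h c k - h/2 \<le> x \<and> x < midpt h c k + h/2"
    using assms unfolding midpt_def by (auto simp: field_simps)
  finally show ?thesis .
qed

lemma cell_index_add:
  assumes "h > 0"
  shows "cell_index h c (x + of_int l * h) = cell_index h c x + l"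
proof -
  have "(x + of_int l * h - c) / h + 1/2 = ((x - c) / h + 1/2) + of_int l"
    using assms by (simp add: field_simps)
  then show ?thesis unfolding cell_index_def by (simp only: floor_add_int)
qed

lemma abs_diff_midpt_cell_index_le:
  assumes "h > 0"
  shows "\<bar>x - midpt h c (cell_index h c x)\<bar> \<le> h/2"
  using cell_index_eq_iff[OF assms, of c x "cell_index h c x"] unfolding abs_le_iff by linarith

lemma midpt_mono: "h > 0 \<Longrightarrow> k \<le> k' \<Longrightarrow> midpt h c k \<le> midpt h c k'"
  unfolding midpt_def by (simp add: mult_right_mono)

lemma midpt_add_one: "midpt h c (k + 1) = midpt h c k + h"
  unfolding midpt_def by (simp add: algebra_simps)

lemma time_index_bounds:
  assumes "strict_mono ts" "ts 0 = 0" "filterlim ts at_top sequentially" "0 \<le> t"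
  shows "ts (time_index ts t) \<le> t" "t < ts (Suc (time_index ts t))"
proof -
  obtain n0 where "t < ts n0"
    using assms(3) by (auto simp: filterlim_at_top_dense eventually_sequentially)
  then have "t < ts (Suc n0)"
    using assms(1) by (meson lessI order.strict_trans strict_monoD)
  then show "t < ts (Suc (time_index ts t))"
    unfolding time_index_def by (rule LeastI)
  show "ts (time_index ts t) \<le> t"
  proof (cases "time_index ts t")
    case 0
    then show ?thesis using assms by simp
  next
    case (Suc m)
    then have "\<not> t < ts (Suc m)"
      using not_less_Least[of m "\<lambda>n. t < ts (Suc n)"] unfolding time_index_def by simp
    then show ?thesis using Suc by simp
  qed
qed

lemma time_index_eq_iff:
  assumes "strict_mono ts" "ts 0 = 0" "filterlim ts at_top sequentially" "0 \<le> t"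
  shows "time_index ts t = n \<longleftrightarrow> ts n \<le> t \<and> t < ts (Suc n)"
proof
  assume "ts n \<le> t \<and> t < ts (Suc n)"
  moreover note time_index_bounds[OF assms]
  ultimately have "\<not> Suc (time_index ts t) \<le> n" "\<not> Suc n \<le> time_index ts t"
    using strict_mono_less_eq[OF assms(1)] by (meson not_le order.trans)+
  then show "time_index ts t = n" by linarith
qed (use time_index_bounds[OF assms] in auto)

lemma time_index_le:
  assumes "t < ts (Suc N)"
  shows "time_index ts t \<le> N"
  unfolding time_index_def by (rule Least_le, rule assms)

lemma piecewise_const_shift:
  assumes "h > 0"
  shows "piecewise_const h c ts V (x + of_int l * h, t) = V (time_index ts t) (cell_index h c x + l)"
  unfolding piecewise_const_def using cell_index_add[OF assms] by simp

lemma piecewise_const_bounded: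
  assumes h: "h > 0" and unb: "filterlim ts at_top sequentially"
  obtains M where "\<And>z. \<bar>fst z\<bar> \<le> X \<Longrightarrow> snd z \<le> T \<Longrightarrow> norm (piecewise_const h c ts V z) \<le> M"
proof -
  obtain N0 where "\<forall>n\<ge>N0. T < ts n"
    using unb by (auto simp: filterlim_at_top_dense eventually_sequentially)
  then have N: "T < ts (Suc N0)" by simp
  define k0 where "k0 = cell_index h c (- X)"
  define k1 where "k1 = cell_index h c X"
  define M where "M = Max ((\<lambda>(n, k). norm (V n k)) ` ({..N0} \<times> {k0..k1}))"
  show thesis
  proof (rule that[of M])
    fix z :: "real \<times> real" assume x: "\<bar>fst z\<bar> \<le> X" and t: "snd z \<le> T"
    have "time_index ts (snd z) \<le> N0" using N t by (intro time_index_le) simp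
    moreover have "k0 \<le> cell_index h c (fst z)" "cell_index h c (fst z) \<le> k1"
      unfolding k0_def k1_def cell_index_def
      using x h by (auto intro!: floor_mono divide_right_mono)
    ultimately show "norm (piecewise_const h c ts V z) \<le> M"
      unfolding M_def piecewise_const_def by (intro Max_ge) force+
  qed
qed

lemma eventually_piecewise_const_shift_eq:
  assumes h: "h > 0" and off_interface: "(x - c) / h + 1/2 \<notin> \<int>" and s: "s \<longlonglongrightarrow> 0"
  shows "\<forall>\<^sub>F j in sequentially. piecewise_const h c ts V (x + s j, t) = piecewise_const h c ts V (x, t)"
proof -
  have "(\<lambda>j. (x + s j - c) / h + 1/2) \<longlonglongrightarrow> (x + 0 - c) / h + 1/2"
    using h by (intro tendsto_intros s) auto
  then have "\<forall>\<^sub>F j in sequentially. cell_index h c (x + s j) = cell_index h c x"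
    unfolding cell_index_def using off_interface by (auto intro: eventually_floor_eq)
  then show ?thesis
    unfolding piecewise_const_def by (rule eventually_mono) simp
qed

lemma cell_interfaces_null:
  assumes h: "h > 0"
  shows "{z :: real \<times> real. (fst z - c) / h + 1/2 \<in> \<int>} \<in> null_sets lebesgue"
proof -
  have b: "(1::real, 0::real) \<in> Basis" by (simp add: Basis_prod_def)
  have "{z :: real \<times> real. (fst z - c) / h + 1/2 \<in> \<int>} =
      (\<Union>k. {z. z \<bullet> (1, 0) = c + (of_int k - 1/2) * h})"
  proof (intro set_eqI iffI)
    fix z :: "real \<times> real"
    assume "z \<in> {z. (fst z - c) / h + 1/2 \<in> \<int>}"
    then obtain k where "(fst z - c) / h + 1/2 = of_int k" by (auto elim: Ints_cases)
    then have "fst z = c + (of_int k - 1/2) * h" using h by (simp add: field_simps)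
    then show "z \<in> (\<Union>k. {z. z \<bullet> (1, 0) = c + (of_int k - 1/2) * h})"
      by (cases z) (auto simp: inner_prod_def)
  next
    fix z :: "real \<times> real"
    assume "z \<in> (\<Union>k. {z. z \<bullet> (1, 0) = c + (of_int k - 1/2) * h})"
    then obtain k :: int where "fst z = c + (of_int k - 1/2) * h"
      by (cases z) (auto simp: inner_prod_def)
    then have "(fst z - c) / h + 1/2 = of_int k" using h by (simp add: field_simps)
    then show "z \<in> {z. (fst z - c) / h + 1/2 \<in> \<int>}" by (metis Ints_of_int mem_Collect_eq)
  qed
  moreover have "negligible (\<Union>k :: int. {z :: real \<times> real. z \<bullet> (1, 0) = c + (of_int k - 1/2) * h})"
    by (rule negligible_countable_Union) (auto intro: negligible_standard_hyperplane[OF b])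
  ultimately show ?thesis by (simp add: negligible_iff_null_sets)
qed

section \<open>Test functions and integrals over cells\<close>

lemma test_function_support:
  assumes tf: "test_function \<phi> phx pht"
  obtains R \<delta> T where "0 \<le> R" "0 < \<delta>" "\<delta> \<le> T"
    "\<And>x t. \<phi> (x, t) \<noteq> 0 \<Longrightarrow> \<bar>x\<bar> \<le> R \<and> \<delta> \<le> t \<and> t \<le> T"
    "\<And>x t. pht (x, t) \<noteq> 0 \<Longrightarrow> \<bar>x\<bar> \<le> R \<and> \<delta> \<le> t \<and> t \<le> T"
    "\<And>x t. phx (x, t) \<noteq> 0 \<Longrightarrow> \<bar>x\<bar> \<le> R \<and> \<delta> \<le> t \<and> t \<le> T"
proof -
  from tf obtain R0 \<delta> T0 where \<delta>: "0 < \<delta>"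
    and supp0: "\<And>x t. \<phi> (x, t) \<noteq> 0 \<Longrightarrow> \<bar>x\<bar> \<le> R0 \<and> \<delta> \<le> t \<and> t \<le> T0"
    unfolding test_function_def by blast
  define R where "R = max R0 0"
  define T where "T = max T0 \<delta>"
  define box where "box = cbox (- R, \<delta>) (R, T)"
  have open_complement: "open (- box)"
    unfolding box_def by auto
  have supp: "\<phi> z \<noteq> 0 \<Longrightarrow> z \<in> box" for z
    using supp0[of "fst z" "snd z"] unfolding box_def R_def T_def by (cases z) (auto simp: abs_le_iff)
  have vanish_near: "\<exists>d>0. \<forall>w. dist (x, t) w < d \<longrightarrow> \<phi> w = 0" if out: "(x, t) \<notin> box" for x t
  proof -
    obtain d where "d > 0" "ball (x, t) d \<subseteq> - box"
      using open_complement out by (meson ComplI open_contains_ball_eq)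
    then show ?thesis
      using supp by (metis ComplD mem_ball subsetD)
  qed
  have "pht (x, t) = 0 \<and> phx (x, t) = 0" if out: "(x, t) \<notin> box" for x t
  proof -
    obtain d where "d > 0" and "\<And>w. dist (x, t) w < d \<Longrightarrow> \<phi> w = 0"
      using vanish_near[OF out] by blast
    then have "\<forall>s. \<bar>t - s\<bar> < d \<longrightarrow> \<phi> (x, t) = \<phi> (x, s)" "\<forall>y. \<bar>x - y\<bar> < d \<longrightarrow> \<phi> (x, t) = \<phi> (y, t)"
      by (simp_all add: dist_Pair_Pair dist_real_def)
    then show ?thesis
      using tf \<open>d > 0\<close> unfolding test_function_def by (metis DERIV_local_const)
  qed
  then show thesis
    using that[of R \<delta> T] supp \<delta> unfolding box_def R_def T_def
    by (fastforce simp: abs_le_iff)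
qed

lemma test_function_bounded_derivatives:
  assumes tf: "test_function \<phi> phx pht"
  obtains P where "\<And>z. \<bar>pht z\<bar> \<le> P" "\<And>z. \<bar>phx z\<bar> \<le> P"
proof -
  obtain R \<delta> T where supp:
      "\<And>x t. pht (x, t) \<noteq> 0 \<Longrightarrow> \<bar>x\<bar> \<le> R \<and> \<delta> \<le> t \<and> t \<le> T"
      "\<And>x t. phx (x, t) \<noteq> 0 \<Longrightarrow> \<bar>x\<bar> \<le> R \<and> \<delta> \<le> t \<and> t \<le> T"
    using test_function_support[OF tf] by metis
  define K where "K = cbox (- R, \<delta>) (R, T)"
  have bounded: "\<exists>B. \<forall>z. \<bar>q z\<bar> \<le> B"
    if "continuous_on UNIV q" "\<And>x t. q (x, t) \<noteq> 0 \<Longrightarrow> \<bar>x\<bar> \<le> R \<and> \<delta> \<le> t \<and> t \<le> T"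
    for q :: "real \<times> real \<Rightarrow> real"
  proof -
    have "compact (q ` K)"
      unfolding K_def by (intro compact_continuous_image continuous_on_subset[OF that(1)]) auto
    then obtain B where B: "\<forall>y \<in> q ` K. \<bar>y\<bar> \<le> B"
      using bounded_iff compact_imp_bounded real_norm_def by metis
    have "\<bar>q z\<bar> \<le> max B 0" for z
    proof (cases "q z = 0")
      case False
      then have "z \<in> K"
        using that(2)[of "fst z" "snd z"] unfolding K_def by (cases z) (auto simp: abs_le_iff)
      then show ?thesis using B by fastforce
    qed simp
    then show ?thesis by blast
  qed
  obtain Bt Bx where "\<And>z. \<bar>pht z\<bar> \<le> Bt" "\<And>z. \<bar>phx z\<bar> \<le> Bx"
    using bounded[of pht] bounded[of phx] supp tf unfolding test_function_def by metis
  then show thesis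
    using that[of "max Bt Bx"] by (meson max.coboundedI1 max.coboundedI2 order_trans)
qed

lemma lborel_integral_Ico_FTC:
  fixes F F' :: "real \<Rightarrow> real"
  assumes deriv: "\<And>s. (F has_real_derivative F' s) (at s)" and cont: "continuous_on UNIV F'"
    and "a \<le> b"
  shows "integral\<^sup>L lborel (\<lambda>s. indicator {a..<b} s * F' s) = F b - F a"
proof -
  have [measurable]: "F' \<in> borel_measurable borel"
    using cont by (rule borel_measurable_continuous_onI)
  have "integral\<^sup>L lborel (\<lambda>s. indicator {a..<b} s * F' s) = integral\<^sup>L lborel (\<lambda>s. indicator {a..b} s * F' s)"
    by (intro integral_cong_AE) (auto intro!: AE_I'[of "{b}"] split: split_indicator)
  also have "\<dots> = F b - F a"
    using integral_FTC_atLeastAtMost[OF \<open>a \<le> b\<close>, of F F'] deriv continuous_on_subset[OF cont]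
    by (simp add: has_real_derivative_iff_has_vector_derivative has_vector_derivative_at_within)
  finally show ?thesis .
qed

lemma lebesgue_integral_product:
  fixes A B :: "real \<Rightarrow> real"
  assumes [measurable]: "A \<in> borel_measurable borel" "B \<in> borel_measurable borel"
    and bound_A: "\<And>x. \<bar>A x\<bar> \<le> Ca * indicator {a..b} x"
    and bound_B: "\<And>t. \<bar>B t\<bar> \<le> Cb * indicator {c..d} t"
  shows "integrable lebesgue (\<lambda>z. A (fst z) * B (snd z))"
    and "integral\<^sup>L lebesgue (\<lambda>z. A (fst z) * B (snd z)) = integral\<^sup>L lborel A * integral\<^sup>L lborel B"
proof -
  have dominant: "integrable (lborel \<Otimes>\<^sub>M lborel) (\<lambda>z::real \<times> real. Ca * Cb * indicator (cbox (a, c) (b, d)) z)"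
    unfolding lborel_prod
    by (intro integrable_mult_right integrable_real_indicator)
       (auto simp: emeasure_lborel_cbox_finite[unfolded infinity_ennreal_def])
  have "\<bar>A x * B t\<bar> \<le> Ca * Cb * indicator (cbox (a, c) (b, d)) (x, t)" for x t
  proof -
    have "\<bar>A x * B t\<bar> \<le> (Ca * indicator {a..b} x) * (Cb * indicator {c..d} t)"
      unfolding abs_mult using bound_A bound_B order_trans[OF abs_ge_zero bound_A]
      by (intro mult_mono) auto
    then show ?thesis by (auto split: split_indicator)
  qed
  then have prod: "integrable (lborel \<Otimes>\<^sub>M lborel) (\<lambda>z. A (fst z) * B (snd z))"
    by (intro Bochner_Integration.integrable_bound[OF dominant] AE_I2) (auto intro: order_trans[OF _ abs_ge_self])
  then have "integrable lborel (\<lambda>z :: real \<times> real. A (fst z) * B (snd z))"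
    by (simp add: lborel_prod)
  then show "integrable lebesgue (\<lambda>z. A (fst z) * B (snd z))"
    by (simp add: integrable_completion)
  have "(\<lambda>z. A (fst z) * B (snd z)) \<in> borel_measurable (lborel \<Otimes>\<^sub>M lborel)"
    by measurable
  then have "integral\<^sup>L lebesgue (\<lambda>z. A (fst z) * B (snd z)) = integral\<^sup>L (lborel \<Otimes>\<^sub>M lborel) (\<lambda>z. A (fst z) * B (snd z))"
    by (simp add: integral_completion lborel_prod)
  also have "\<dots> = (\<integral>x. (\<integral>t. A x * B t \<partial>lborel) \<partial>lborel)"
    using lborel_pair.integral_fst'[OF prod] by simp
  also have "\<dots> = integral\<^sup>L lborel A * integral\<^sup>L lborel B"
    by simp
  finally show "integral\<^sup>L lebesgue (\<lambda>z. A (fst z) * B (snd z)) = integral\<^sup>L lborel A * integral\<^sup>L lborel B" .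
qed

definition cell_rectangle :: "real \<Rightarrow> real \<Rightarrow> (nat \<Rightarrow> real) \<Rightarrow> nat \<Rightarrow> int \<Rightarrow> (real \<times> real) set" where
  "cell_rectangle h c ts n k = {midpt h c k - h/2 ..< midpt h c k + h/2} \<times> {ts n ..< ts (Suc n)}"

lemma integral_cell_rectangle:
  fixes V F :: "'v::euclidean_space" and m :: real
  assumes tf: "test_function \<phi> phx pht" and h: "h > 0" and "ta \<le> tb"
  defines "Q \<equiv> \<lambda>z. indicator ({m - h/2 ..< m + h/2} \<times> {ta ..< tb}) z *\<^sub>R
                     (pht (m, snd z) *\<^sub>R V + phx (fst z + h/2, tb) *\<^sub>R F)"
  shows "integrable lebesgue Q"
    and "integral\<^sup>L lebesgue Q =
           (h * (\<phi> (m, tb) - \<phi> (m, ta))) *\<^sub>R V + ((tb - ta) * (\<phi> (m + h, tb) - \<phi> (m, tb))) *\<^sub>R F"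
proof -
  obtain P where Pt: "\<And>z. \<bar>pht z\<bar> \<le> P" and Px: "\<And>z. \<bar>phx z\<bar> \<le> P"
    using test_function_bounded_derivatives[OF tf] by blast
  have "0 \<le> P"
    using order_trans[OF abs_ge_zero Pt] by blast
  have ct: "continuous_on UNIV (\<lambda>t. pht (m, t))" and cx: "continuous_on UNIV (\<lambda>x. phx (x + h/2, tb))"
    using tf unfolding test_function_def
    by (auto intro!: continuous_on_compose2[of UNIV pht] continuous_on_compose2[of UNIV phx]
        continuous_on_Pair continuous_on_add continuous_on_const continuous_on_id)
  have dt: "((\<lambda>s. \<phi> (m, s)) has_real_derivative pht (m, t)) (at t)" for t
    using tf unfolding test_function_def by blast
  have dx: "((\<lambda>y. \<phi> (y + h/2, tb)) has_real_derivative phx (x + h/2, tb)) (at x)" for x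
    using tf DERIV_shift[of "\<lambda>y. \<phi> (y, tb)" "phx (x + h/2, tb)" x "h/2"]
    unfolding test_function_def by simp
  have [measurable]: "(\<lambda>t. pht (m, t)) \<in> borel_measurable borel" "(\<lambda>x. phx (x + h/2, tb)) \<in> borel_measurable borel"
    using ct cx by (auto intro: borel_measurable_continuous_onI)
  define A1 where "A1 x = (indicator {m - h/2 ..< m + h/2} x :: real)" for x
  define B1 where "B1 t = indicator {ta ..< tb} t * pht (m, t)" for t
  define A2 where "A2 x = indicator {m - h/2 ..< m + h/2} x * phx (x + h/2, tb)" for x
  define B2 where "B2 t = (indicator {ta ..< tb} t :: real)" for t
  have Q_eq: "Q = (\<lambda>z. (A1 (fst z) * B1 (snd z)) *\<^sub>R V + (A2 (fst z) * B2 (snd z)) *\<^sub>R F)"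
    unfolding Q_def A1_def B1_def A2_def B2_def by (auto split: split_indicator)
  have "\<bar>A1 x\<bar> \<le> 1 * indicator {m - h/2..m + h/2} x" "\<bar>A2 x\<bar> \<le> P * indicator {m - h/2..m + h/2} x"
       "\<bar>B1 t\<bar> \<le> P * indicator {ta..tb} t" "\<bar>B2 t\<bar> \<le> 1 * indicator {ta..tb} t" for x t
    unfolding A1_def B1_def A2_def B2_def using Pt Px \<open>0 \<le> P\<close> by (auto split: split_indicator)
  note I1 = lebesgue_integral_product[of A1 B1, OF _ _ this(1) this(3)]
   and I2 = lebesgue_integral_product[of A2 B2, OF _ _ this(2) this(4)]
  have "integral\<^sup>L lborel A1 = h" "integral\<^sup>L lborel B2 = tb - ta"
    using lborel_integral_Ico_FTC[of "\<lambda>s. s" "\<lambda>_. 1"] h \<open>ta \<le> tb\<close> unfolding A1_def B2_def by auto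
  moreover have "integral\<^sup>L lborel B1 = \<phi> (m, tb) - \<phi> (m, ta)"
    unfolding B1_def using lborel_integral_Ico_FTC[OF dt ct \<open>ta \<le> tb\<close>] .
  moreover have "integral\<^sup>L lborel A2 = \<phi> (m + h, tb) - \<phi> (m, tb)"
    unfolding A2_def using lborel_integral_Ico_FTC[OF dx cx, of "m - h/2" "m + h/2"] h
    by (simp add: add.commute)
  ultimately show "integrable lebesgue Q"
    and "integral\<^sup>L lebesgue Q =
           (h * (\<phi> (m, tb) - \<phi> (m, ta))) *\<^sub>R V + ((tb - ta) * (\<phi> (m + h, tb) - \<phi> (m, tb))) *\<^sub>R F"
    unfolding Q_eq using I1 I2 unfolding A1_def B1_def A2_def B2_def by (simp_all add: mult.commute)
qed

section \<open>The discrete weak form vanishes\<close>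

lemma summation_by_parts_zero_boundary:
  fixes F :: "int \<Rightarrow> 'v::real_vector" and \<psi> :: "nat \<Rightarrow> real"
  assumes "\<psi> 0 = 0" "\<psi> M = 0"
  shows "(\<Sum>i<M. (\<psi> (Suc i) - \<psi> i) *\<^sub>R F (k0 + int i)) =
         (\<Sum>i<M. \<psi> i *\<^sub>R (F (k0 + int i - 1) - F (k0 + int i)))"
proof -
  have "(\<Sum>i<m. \<psi> i *\<^sub>R (F (k0 + int i - 1) - F (k0 + int i))) =
        (\<Sum>i<m. (\<psi> (Suc i) - \<psi> i) *\<^sub>R F (k0 + int i)) + \<psi> 0 *\<^sub>R F (k0 - 1) - \<psi> m *\<^sub>R F (k0 + int m - 1)"
    for m
  proof (induction m)
    case (Suc m)
    have "k0 + int (Suc m) - 1 = k0 + int m" by simp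
    then show ?case unfolding sum.lessThan_Suc Suc.IH by (simp add: algebra_simps)
  qed simp
  then show ?thesis using assms by simp
qed

lemma scheme_summation_by_parts:
  fixes V F :: "nat \<Rightarrow> int \<Rightarrow> 'v::real_vector" and \<Phi> :: "int \<Rightarrow> nat \<Rightarrow> real" and t :: "nat \<Rightarrow> real"
  assumes h: "h \<noteq> 0"
    and scheme: "\<And>n k. V (Suc n) k = V n k + ((t (Suc n) - t n) / h) *\<^sub>R (F n (k - 1) - F n k)"
    and left: "\<And>n. \<Phi> k0 n = 0" and right: "\<And>n. \<Phi> (k0 + int M) n = 0"
    and initial: "\<And>k. \<Phi> k 0 = 0" and final: "\<And>k. \<Phi> k N = 0"
  shows "(\<Sum>n<N. \<Sum>i<M. (h * (\<Phi> (k0 + int i) (Suc n) - \<Phi> (k0 + int i) n)) *\<^sub>R V n (k0 + int i)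
            + ((t (Suc n) - t n) * (\<Phi> (k0 + int i + 1) (Suc n) - \<Phi> (k0 + int i) (Suc n))) *\<^sub>R F n (k0 + int i)) = 0"
    (is "(\<Sum>n<N. \<Sum>i<M. ?term n i) = 0")
proof -
  define \<Psi> where "\<Psi> n i = \<Phi> (k0 + int i) n" for n i
  define W where "W n i = \<Psi> n i *\<^sub>R V n (k0 + int i)" for n i
  have space_step: "(\<Sum>i<M. ((t (Suc n) - t n) * (\<Psi> (Suc n) (Suc i) - \<Psi> (Suc n) i)) *\<^sub>R F n (k0 + int i))
      = (\<Sum>i<M. h *\<^sub>R (\<Psi> (Suc n) i *\<^sub>R (V (Suc n) (k0 + int i) - V n (k0 + int i))))" for n
  proof -
    have "\<Psi> (Suc n) 0 = 0" "\<Psi> (Suc n) M = 0"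
      using left right by (simp_all add: \<Psi>_def)
    then have "(\<Sum>i<M. ((t (Suc n) - t n) * (\<Psi> (Suc n) (Suc i) - \<Psi> (Suc n) i)) *\<^sub>R F n (k0 + int i))
        = (t (Suc n) - t n) *\<^sub>R (\<Sum>i<M. \<Psi> (Suc n) i *\<^sub>R (F n (k0 + int i - 1) - F n (k0 + int i)))"
      by (simp add: summation_by_parts_zero_boundary[symmetric] scaleR_sum_right)
    also have "\<dots> = (\<Sum>i<M. \<Psi> (Suc n) i *\<^sub>R (h *\<^sub>R (V (Suc n) (k0 + int i) - V n (k0 + int i))))"
      using scheme h by (simp add: scaleR_sum_right scaleR_left_commute mult.commute)
    finally show ?thesis by (simp add: mult.commute)
  qed
  have "(\<Sum>i<M. ?term n i) = (\<Sum>i<M. (h * (\<Psi> (Suc n) i - \<Psi> n i)) *\<^sub>R V n (k0 + int i))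
      + (\<Sum>i<M. h *\<^sub>R (\<Psi> (Suc n) i *\<^sub>R (V (Suc n) (k0 + int i) - V n (k0 + int i))))" for n
    unfolding space_step[symmetric] sum.distrib by (simp add: \<Psi>_def add_ac)
  also have "\<dots> n = (\<Sum>i<M. h *\<^sub>R (W (Suc n) i - W n i))" for n
    unfolding sum.distrib[symmetric] W_def by (intro sum.cong) (auto simp: algebra_simps)
  finally have "(\<Sum>i<M. ?term n i) = (\<Sum>i<M. h *\<^sub>R (W (Suc n) i - W n i))" for n .
  then have "(\<Sum>n<N. \<Sum>i<M. ?term n i) = (\<Sum>i<M. h *\<^sub>R (\<Sum>n<N. W (Suc n) i - W n i))"
    by (simp add: sum.swap[of _ "{..<N}"] scaleR_sum_right)
  also have "\<dots> = (\<Sum>i<M. h *\<^sub>R (W N i - W 0 i))"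
    using sum_lessThan_telescope[of "\<lambda>n. W n i" N for i] by simp
  also have "\<dots> = 0"
    using initial final by (simp add: W_def \<Psi>_def)
  finally show ?thesis .
qed

text \<open>The evaluation points \<open>x + h/2\<close> and \<open>t\<^sup>n\<^sup>+\<^sup>1\<close> are chosen so that integrating over a cell
  produces exactly the differences of \<open>\<phi>\<close> at grid points that arise when the scheme is tested
  against \<open>\<phi>(w\<^sub>k, t\<^sup>n)\<close>; for \<open>t < 0\<close>, where \<open>time_index\<close> is meaningless, the value is \<open>0\<close>.\<close>
definition discrete_weak_integrand ::
  "(real \<times> real \<Rightarrow> real) \<Rightarrow> (real \<times> real \<Rightarrow> real) \<Rightarrow> real \<Rightarrow> real \<Rightarrow> (nat \<Rightarrow> real)
    \<Rightarrow> (nat \<Rightarrow> int \<Rightarrow> 'v) \<Rightarrow> (nat \<Rightarrow> int \<Rightarrow> 'v) \<Rightarrow> real \<times> real \<Rightarrow> 'v::real_vector" where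
  "discrete_weak_integrand phx pht h c ts V F z =
     (if snd z < 0 then 0 else
        pht (midpt h c (cell_index h c (fst z)), snd z) *\<^sub>R V (time_index ts (snd z)) (cell_index h c (fst z))
      + phx (fst z + h/2, ts (Suc (time_index ts (snd z)))) *\<^sub>R F (time_index ts (snd z)) (cell_index h c (fst z)))"

lemma indicator_cell_rectangle:
  assumes h: "h > 0" and ts: "strict_mono ts" "ts 0 = 0" "filterlim ts at_top sequentially"
  shows "indicator (cell_rectangle h c ts n k) z =
    (if 0 \<le> snd z \<and> time_index ts (snd z) = n \<and> cell_index h c (fst z) = k then 1 else (0::real))"
proof (cases "0 \<le> snd z")
  case True
  then show ?thesis
    unfolding cell_rectangle_def
    using time_index_eq_iff[OF ts True] cell_index_eq_iff[OF h] by (cases z) (auto split: split_indicator)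
next
  case False
  moreover have "0 \<le> ts n"
    using ts strict_mono_less_eq[OF ts(1), of 0 n] by simp
  ultimately show ?thesis
    unfolding cell_rectangle_def by (cases z) (auto split: split_indicator)
qed

lemma discrete_weak_integrand_eq_sum:
  assumes h: "h > 0" and ts: "strict_mono ts" "ts 0 = 0" "filterlim ts at_top sequentially"
    and vanish: "0 \<le> snd z \<Longrightarrow>
      \<not> (time_index ts (snd z) < N \<and> k0 \<le> cell_index h c (fst z) \<and> cell_index h c (fst z) < k0 + int M) \<Longrightarrow>
      discrete_weak_integrand phx pht h c ts V F z = 0"
  shows "discrete_weak_integrand phx pht h c ts V F z =
    (\<Sum>n<N. \<Sum>i<M. indicator (cell_rectangle h c ts n (k0 + int i)) z *\<^sub>R
       (pht (midpt h c (k0 + int i), snd z) *\<^sub>R V n (k0 + int i) + phx (fst z + h/2, ts (Suc n)) *\<^sub>R F n (k0 + int i)))"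
proof (cases "0 \<le> snd z")
  case True
  define n0 where "n0 = time_index ts (snd z)"
  define k where "k = cell_index h c (fst z)"
  define i0 where "i0 = nat (k - k0)"
  define X where "X n k = pht (midpt h c k, snd z) *\<^sub>R V n k + phx (fst z + h/2, ts (Suc n)) *\<^sub>R F n k" for n k
  have ind: "indicator (cell_rectangle h c ts n (k0 + int i)) z = (if n = n0 \<and> i = i0 \<and> k0 \<le> k then 1 else (0::real))"
    for n i
    unfolding indicator_cell_rectangle[OF h ts] n0_def k_def i0_def using True by auto
  have inner: "(\<Sum>i<M. indicator (cell_rectangle h c ts n (k0 + int i)) z *\<^sub>R X n (k0 + int i))
      = (if n = n0 then if i0 < M \<and> k0 \<le> k then X n0 k else 0 else 0)" for n
  proof (cases "n = n0 \<and> k0 \<le> k")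
    case True
    then have "(\<Sum>i<M. indicator (cell_rectangle h c ts n (k0 + int i)) z *\<^sub>R X n (k0 + int i))
        = (\<Sum>i<M. if i = i0 then X n0 k else 0)"
      using ind by (intro sum.cong) (auto simp: i0_def)
    then show ?thesis using True by simp
  qed (use ind in auto)
  have "(\<Sum>n<N. \<Sum>i<M. indicator (cell_rectangle h c ts n (k0 + int i)) z *\<^sub>R X n (k0 + int i))
      = (if n0 < N \<and> i0 < M \<and> k0 \<le> k then X n0 k else 0)"
    unfolding inner by simp
  also have "\<dots> = discrete_weak_integrand phx pht h c ts V F z"
  proof (cases "n0 < N \<and> i0 < M \<and> k0 \<le> k")
    case True
    then show ?thesis
      using \<open>0 \<le> snd z\<close> unfolding discrete_weak_integrand_def X_def n0_def k_def by simp
  next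
    case False
    then have "\<not> (n0 < N \<and> k0 \<le> k \<and> k < k0 + int M)"
      unfolding i0_def by auto
    then have "discrete_weak_integrand phx pht h c ts V F z = 0"
      using vanish \<open>0 \<le> snd z\<close> unfolding n0_def k_def by simp
    then show ?thesis
      by (simp only: if_not_P[OF False])
  qed
  finally show ?thesis unfolding X_def by simp
next
  case False
  then show ?thesis
    unfolding discrete_weak_integrand_def indicator_cell_rectangle[OF h ts] by simp
qed

lemma discrete_weak_integrand_eq_0:
  assumes h: "h > 0" and ts: "strict_mono ts" "ts 0 = 0" "filterlim ts at_top sequentially"
    and supp_t: "\<And>x t. pht (x, t) \<noteq> 0 \<Longrightarrow> \<bar>x\<bar> \<le> R \<and> t \<le> T"
    and supp_x: "\<And>x t. phx (x, t) \<noteq> 0 \<Longrightarrow> \<bar>x\<bar> \<le> R \<and> t \<le> T"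
    and t: "0 \<le> snd z"
    and far: "R + h < \<bar>midpt h c (cell_index h c (fst z))\<bar> \<or> T < snd z"
  shows "discrete_weak_integrand phx pht h c ts V F z = 0"
proof -
  define n where "n = time_index ts (snd z)"
  define w where "w = midpt h c (cell_index h c (fst z))"
  have "snd z < ts (Suc n)"
    unfolding n_def using time_index_bounds[OF ts t] by auto
  moreover have "\<bar>fst z - w\<bar> \<le> h/2"
    unfolding w_def by (rule abs_diff_midpt_cell_index_le[OF h])
  moreover note far[folded n_def w_def]
  ultimately have "pht (w, snd z) = 0" "phx (fst z + h/2, ts (Suc n)) = 0"
    using supp_t[of w "snd z"] supp_x[of "fst z + h/2" "ts (Suc n)"] h by arith+
  then show ?thesis
    using t unfolding discrete_weak_integrand_def n_def w_def by simp
qed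

lemma discrete_weak_integrand_finite_window:
  assumes tf: "test_function \<phi> phx pht" and h: "h > 0"
    and ts: "strict_mono ts" "ts 0 = 0" "filterlim ts at_top sequentially"
  obtains k0 M N where
    "\<And>z. 0 \<le> snd z \<Longrightarrow> \<not> (time_index ts (snd z) < N \<and> k0 \<le> cell_index h c (fst z)
        \<and> cell_index h c (fst z) < k0 + int M) \<Longrightarrow> discrete_weak_integrand phx pht h c ts V F z = 0"
    "\<And>t. \<phi> (midpt h c k0, t) = 0" "\<And>t. \<phi> (midpt h c (k0 + int M), t) = 0"
    "\<And>x. \<phi> (x, ts 0) = 0" "\<And>x. \<phi> (x, ts N) = 0"
proof -
  obtain R \<delta> T where R: "0 \<le> R" and \<delta>: "0 < \<delta>"
    and supp: "\<And>x t. \<phi> (x, t) \<noteq> 0 \<Longrightarrow> \<bar>x\<bar> \<le> R \<and> \<delta> \<le> t \<and> t \<le> T"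
      "\<And>x t. pht (x, t) \<noteq> 0 \<Longrightarrow> \<bar>x\<bar> \<le> R \<and> \<delta> \<le> t \<and> t \<le> T"
      "\<And>x t. phx (x, t) \<noteq> 0 \<Longrightarrow> \<bar>x\<bar> \<le> R \<and> \<delta> \<le> t \<and> t \<le> T"
    using test_function_support[OF tf] by metis
  obtain N where N: "T < ts N"
    using ts(3) by (auto simp: filterlim_at_top_dense eventually_sequentially)
  obtain k0 where "of_int k0 < (- R - h - c) / h"
    using ex_of_int_less by blast
  moreover obtain k1 where "(R + h - c) / h < of_int k1"
    using ex_less_of_int by blast
  ultimately have left: "midpt h c k0 < - R - h" and right: "R + h < midpt h c k1"
    using h unfolding midpt_def by (simp_all add: field_simps)
  then have "k0 \<le> k1"
    using midpt_mono[OF h, of k1 k0 c] R h by (cases "k1 \<le> k0") linarith+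
  define M where "M = nat (k1 - k0)"
  have kM: "k0 + int M = k1"
    unfolding M_def using \<open>k0 \<le> k1\<close> by simp
  have "discrete_weak_integrand phx pht h c ts V F z = 0"
    if "0 \<le> snd z" and out: "\<not> (time_index ts (snd z) < N \<and> k0 \<le> cell_index h c (fst z)
          \<and> cell_index h c (fst z) < k0 + int M)" for z
  proof (rule discrete_weak_integrand_eq_0[OF h ts _ _ \<open>0 \<le> snd z\<close>])
    show "\<And>x t. pht (x, t) \<noteq> 0 \<Longrightarrow> \<bar>x\<bar> \<le> R \<and> t \<le> T"
      and "\<And>x t. phx (x, t) \<noteq> 0 \<Longrightarrow> \<bar>x\<bar> \<le> R \<and> t \<le> T"
      using supp by blast+
    have "R + h < \<bar>midpt h c k\<bar>" if "k < k0 \<or> k1 \<le> k" for k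
      using that left right midpt_mono[OF h, of k k0 c] midpt_mono[OF h, of k1 k c] by auto
    moreover have "T < snd z" if "N \<le> time_index ts (snd z)"
      using N strict_mono_less_eq[OF ts(1)] time_index_bounds[OF ts \<open>0 \<le> snd z\<close>] that
      by (meson less_le_trans order_trans)
    ultimately show "R + h < \<bar>midpt h c (cell_index h c (fst z))\<bar> \<or> T < snd z"
      using out kM by force
  qed
  moreover have "\<phi> (midpt h c k0, t) = 0" "\<phi> (midpt h c (k0 + int M), t) = 0" "\<phi> (x, ts 0) = 0" "\<phi> (x, ts N) = 0"
    for t x
    unfolding kM using supp(1) left right R h \<delta> N ts(2) by force+
  ultimately show thesis
    using that by blast
qed

lemma has_bochner_integral_discrete_weak_integrand:
  fixes V F :: "nat \<Rightarrow> int \<Rightarrow> 'v::euclidean_space"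
  assumes tf: "test_function \<phi> phx pht" and h: "h > 0"
    and ts: "strict_mono ts" "ts 0 = 0" "filterlim ts at_top sequentially"
    and scheme: "\<And>n k. V (Suc n) k = V n k + ((ts (Suc n) - ts n) / h) *\<^sub>R (F n (k - 1) - F n k)"
  shows "has_bochner_integral lebesgue (discrete_weak_integrand phx pht h c ts V F) 0"
proof -
  obtain k0 M N where vanish:
      "\<And>z. 0 \<le> snd z \<Longrightarrow> \<not> (time_index ts (snd z) < N \<and> k0 \<le> cell_index h c (fst z)
          \<and> cell_index h c (fst z) < k0 + int M) \<Longrightarrow> discrete_weak_integrand phx pht h c ts V F z = 0"
    and boundary: "\<And>t. \<phi> (midpt h c k0, t) = 0" "\<And>t. \<phi> (midpt h c (k0 + int M), t) = 0"
      "\<And>x. \<phi> (x, ts 0) = 0" "\<And>x. \<phi> (x, ts N) = 0"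
    using discrete_weak_integrand_finite_window[OF tf h ts] by metis
  define \<Phi> where "\<Phi> k n = \<phi> (midpt h c k, ts n)" for k n
  define Q where "Q n i z = indicator (cell_rectangle h c ts n (k0 + int i)) z *\<^sub>R
      (pht (midpt h c (k0 + int i), snd z) *\<^sub>R V n (k0 + int i) + phx (fst z + h/2, ts (Suc n)) *\<^sub>R F n (k0 + int i))"
    for n i z
  have "has_bochner_integral lebesgue (Q n i)
      ((h * (\<Phi> (k0 + int i) (Suc n) - \<Phi> (k0 + int i) n)) *\<^sub>R V n (k0 + int i)
        + ((ts (Suc n) - ts n) * (\<Phi> (k0 + int i + 1) (Suc n) - \<Phi> (k0 + int i) (Suc n))) *\<^sub>R F n (k0 + int i))"
    for n i
    using integral_cell_rectangle[OF tf h less_imp_le[OF strict_monoD[OF ts(1) lessI]],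
        where m = "midpt h c (k0 + int i)" and V = "V n (k0 + int i)" and F = "F n (k0 + int i)"]
    unfolding has_bochner_integral_iff Q_def[abs_def] cell_rectangle_def \<Phi>_def midpt_add_one by simp
  then have "has_bochner_integral lebesgue (\<lambda>z. \<Sum>n<N. \<Sum>i<M. Q n i z)
      (\<Sum>n<N. \<Sum>i<M. (h * (\<Phi> (k0 + int i) (Suc n) - \<Phi> (k0 + int i) n)) *\<^sub>R V n (k0 + int i)
        + ((ts (Suc n) - ts n) * (\<Phi> (k0 + int i + 1) (Suc n) - \<Phi> (k0 + int i) (Suc n))) *\<^sub>R F n (k0 + int i))"
    by (intro has_bochner_integral_sum) blast
  moreover have "discrete_weak_integrand phx pht h c ts V F = (\<lambda>z. \<Sum>n<N. \<Sum>i<M. Q n i z)"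
    unfolding Q_def by (intro ext discrete_weak_integrand_eq_sum[OF h ts] vanish)
  ultimately show ?thesis
    using scheme_summation_by_parts[of h V ts F \<Phi> k0 M N] h scheme boundary by (simp add: \<Phi>_def)
qed

section \<open>Numerical fluxes\<close>

lemma flux_family_diag:
  assumes "\<And>a. hh a a = f a" "\<And>a. g a a = f a"
  shows "flux_family \<alpha> hh g l m a a = f a"
  using assms unfolding flux_family_def by (simp add: scaleR_add_left[symmetric])

lemma continuous_on_flux_family:
  fixes hh g :: "'v::real_normed_vector \<Rightarrow> 'v \<Rightarrow> 'v"
  assumes hh: "continuous_on UNIV (\<lambda>(a, b). hh a b)" and g: "continuous_on UNIV (\<lambda>(a, b). g a b)"
  shows "continuous_on UNIV (\<lambda>(a, b). flux_family \<alpha> hh g l m a b)"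
proof -
  have hh': "continuous_on UNIV (\<lambda>z. hh (fst z) (snd z))" and g': "continuous_on UNIV (\<lambda>z. g (fst z) (snd z))"
    using hh g by (simp_all add: case_prod_unfold)
  moreover have "continuous_on UNIV (\<lambda>z. g (snd z) (fst z))"
    using continuous_on_compose[OF continuous_on_swap continuous_on_subset[OF g']] by (simp add: o_def)
  ultimately show ?thesis
    unfolding flux_family_def case_prod_unfold
    by (cases "l = 0 \<and> m = 1"; cases "l = 1 \<and> m = 0")
       (auto intro!: continuous_on_add continuous_on_scaleR continuous_on_const)
qed

lemma num_flux_tendsto:
  fixes hh g :: "'v::real_normed_vector \<Rightarrow> 'v \<Rightarrow> 'v"
  assumes hh_cont: "continuous_on UNIV (\<lambda>(a, b). hh a b)" and g_cont: "continuous_on UNIV (\<lambda>(a, b). g a b)"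
    and hh_cons: "\<And>a. hh a a = f a" and g_cons: "\<And>a. g a a = f a"
    and A_sum: "(\<Sum>l\<in>stencil p. \<Sum>m\<in>stencil p. A l m) = 1"
    and lim: "\<And>l. l \<in> stencil p \<Longrightarrow> ((\<lambda>j. V j (k j + l)) \<longlongrightarrow> a) F"
  shows "((\<lambda>j. num_flux p A \<alpha> hh g (V j) (k j)) \<longlongrightarrow> f a) F"
proof -
  have "((\<lambda>j. flux_family \<alpha> hh g l m (V j (k j + l)) (V j (k j + m))) \<longlongrightarrow> f a) F"
    if "l \<in> stencil p" "m \<in> stencil p" for l m
    using continuous_on_tendsto_compose[OF continuous_on_flux_family[OF hh_cont g_cont, where \<alpha> = \<alpha> and l = l and m = m]
        tendsto_Pair[OF lim lim]] that flux_family_diag[where hh = hh and g = g and f = f, OF hh_cons g_cons]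
    by simp
  then have "((\<lambda>j. num_flux p A \<alpha> hh g (V j) (k j)) \<longlongrightarrow> (\<Sum>l\<in>stencil p. \<Sum>m\<in>stencil p. A l m *\<^sub>R f a)) F"
    unfolding num_flux_def by (intro tendsto_sum tendsto_scaleR tendsto_const) auto
  then show ?thesis
    using A_sum by (simp add: scaleR_sum_left[symmetric])
qed

lemma num_flux_bounded:
  fixes hh g :: "'v::euclidean_space \<Rightarrow> 'v \<Rightarrow> 'v"
  assumes hh_cont: "continuous_on UNIV (\<lambda>(a, b). hh a b)" and g_cont: "continuous_on UNIV (\<lambda>(a, b). g a b)"
  obtains C where "\<And>V k. (\<And>l. l \<in> stencil p \<Longrightarrow> norm (V (k + l)) \<le> r) \<Longrightarrow>
    norm (num_flux p A \<alpha> hh g V k) \<le> C"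
proof -
  have "\<exists>B. \<forall>a b. norm a \<le> r \<longrightarrow> norm b \<le> r \<longrightarrow> norm (flux_family \<alpha> hh g l m a b) \<le> B" for l m
  proof -
    have "compact ((\<lambda>(a, b). flux_family \<alpha> hh g l m a b) ` (cball 0 r \<times> cball 0 r))"
      by (intro compact_continuous_image continuous_on_subset[OF continuous_on_flux_family[OF hh_cont g_cont]]
          compact_Times compact_cball) auto
    then obtain B where "\<forall>y \<in> (\<lambda>(a, b). flux_family \<alpha> hh g l m a b) ` (cball 0 r \<times> cball 0 r). norm y \<le> B"
      using bounded_iff compact_imp_bounded by metis
    then show ?thesis by force
  qed
  then obtain B where B: "\<And>l m a b. norm a \<le> r \<Longrightarrow> norm b \<le> r \<Longrightarrow> norm (flux_family \<alpha> hh g l m a b) \<le> B l m"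
    by metis
  show thesis
  proof (rule that[of "\<Sum>l\<in>stencil p. \<Sum>m\<in>stencil p. \<bar>A l m\<bar> * B l m"])
    fix V :: "int \<Rightarrow> 'v" and k assume V: "\<And>l. l \<in> stencil p \<Longrightarrow> norm (V (k + l)) \<le> r"
    have "norm (num_flux p A \<alpha> hh g V k)
        \<le> (\<Sum>l\<in>stencil p. \<Sum>m\<in>stencil p. norm (A l m *\<^sub>R flux_family \<alpha> hh g l m (V (k + l)) (V (k + m))))"
      unfolding num_flux_def by (intro order_trans[OF norm_sum] sum_mono norm_sum)
    also have "\<dots> \<le> (\<Sum>l\<in>stencil p. \<Sum>m\<in>stencil p. \<bar>A l m\<bar> * B l m)"
      using V B by (auto intro!: sum_mono mult_left_mono)
    finally show "norm (num_flux p A \<alpha> hh g V k) \<le> (\<Sum>l\<in>stencil p. \<Sum>m\<in>stencil p. \<bar>A l m\<bar> * B l m)" .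
  qed
qed

section \<open>Convergence of the discrete weak form\<close>

lemma
  fixes f :: "'a \<Rightarrow> 'b::{banach, second_countable_topology}" and w :: "'a \<Rightarrow> real"
  assumes "f \<in> borel_measurable M" "\<And>i. s i \<in> borel_measurable M" "integrable M w"
    and lim: "AE x in M. (\<lambda>i. s i x) \<longlonglongrightarrow> f x"
    and bound: "\<forall>\<^sub>F i in sequentially. AE x in M. norm (s i x) \<le> w x"
  shows integrable_dominated_convergence_eventually: "integrable M f"
    and integral_dominated_convergence_eventually: "(\<lambda>i. integral\<^sup>L M (s i)) \<longlonglongrightarrow> integral\<^sup>L M f"
proof -
  obtain i0 where "\<And>i. AE x in M. norm (s (i + i0) x) \<le> w x"
    using bound unfolding eventually_sequentially by (metis le_add2)
  moreover have "AE x in M. (\<lambda>i. s (i + i0) x) \<longlonglongrightarrow> f x"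
    using lim by eventually_elim (rule LIMSEQ_ignore_initial_segment)
  ultimately show "integrable M f" "(\<lambda>i. integral\<^sup>L M (s i)) \<longlonglongrightarrow> integral\<^sup>L M f"
    using integrable_dominated_convergence[of f M "\<lambda>i. s (i + i0)" w]
      integral_dominated_convergence[of f M "\<lambda>i. s (i + i0)" w] assms(1-3)
    by (auto intro: LIMSEQ_offset)
qed

lemma norm_diff_add_le: "norm (a - b + c) \<le> norm a + norm b + norm (c :: 'a::real_normed_vector)"
  using norm_triangle_ineq[of "a - b" c] norm_triangle_ineq4[of a b] by linarith

locale lax_wendroff_convergence =
  fixes f :: "'v::euclidean_space \<Rightarrow> 'v" and hh g :: "'v \<Rightarrow> 'v \<Rightarrow> 'v"
    and p :: nat and A :: "int \<Rightarrow> int \<Rightarrow> real" and \<alpha> :: real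
    and hs cs :: "nat \<Rightarrow> real" and ts :: "nat \<Rightarrow> nat \<Rightarrow> real"
    and U :: "nat \<Rightarrow> nat \<Rightarrow> int \<Rightarrow> 'v" and u :: "real \<times> real \<Rightarrow> 'v" and N :: "(real \<times> real) set"
  assumes p_pos: "1 \<le> p" and A_sum: "(\<Sum>l\<in>stencil p. \<Sum>m\<in>stencil p. A l m) = 1"
    and hh_cons: "\<And>a. hh a a = f a" and g_cons: "\<And>a. g a a = f a"
    and hh_cont: "continuous_on UNIV (\<lambda>(a, b). hh a b)" and g_cont: "continuous_on UNIV (\<lambda>(a, b). g a b)"
    and h_pos: "\<And>j. 0 < hs j" and h_lim: "hs \<longlonglongrightarrow> 0"
    and t_mono: "\<And>j. strict_mono (ts j)" and t0: "\<And>j. ts j 0 = 0"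
    and t_unbounded: "\<And>j. filterlim (ts j) at_top sequentially"
    and dt_lim: "\<And>\<epsilon>. 0 < \<epsilon> \<Longrightarrow> \<forall>\<^sub>F j in sequentially. \<forall>n. ts j (Suc n) - ts j n < \<epsilon>"
    and scheme: "\<And>j n k. U j (Suc n) k = U j n k + ((ts j (Suc n) - ts j n) / hs j) *\<^sub>R
          (num_flux p A \<alpha> hh g (U j n) (k - 1) - num_flux p A \<alpha> hh g (U j n) k)"
    and N_null: "N \<in> null_sets lebesgue"
    and uniform_conv: "\<And>\<epsilon>. 0 < \<epsilon> \<Longrightarrow> \<forall>\<^sub>F j in sequentially. \<forall>z. 0 \<le> snd z \<and> z \<notin> N \<longrightarrow>
          norm (piecewise_const (hs j) (cs j) (ts j) (U j) z - u z) < \<epsilon>"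
begin

abbreviation u_h :: "nat \<Rightarrow> real \<times> real \<Rightarrow> 'v" where
  "u_h j \<equiv> piecewise_const (hs j) (cs j) (ts j) (U j)"

definition exceptional_set :: "(real \<times> real) set" where
  "exceptional_set = (\<Union>j. \<Union>l::int. (+) (- of_int l * hs j, 0) ` N) \<union> (\<Union>j. {z. (fst z - cs j) / hs j + 1/2 \<in> \<int>})"

lemma exceptional_set_null: "exceptional_set \<in> null_sets lebesgue"
proof -
  have "negligible N"
    using N_null by (simp add: negligible_iff_null_sets)
  then have "(+) (- of_int l * hs j, 0) ` N \<in> null_sets lebesgue" for j l
    using negligible_translation negligible_iff_null_sets by blast
  then show ?thesis
    unfolding exceptional_set_def using cell_interfaces_null[OF h_pos]
    by (intro null_sets.Un null_sets_UN null_sets_UN') auto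
qed

lemma notin_exceptional_set:
  assumes "z \<notin> exceptional_set"
  shows "(fst z + of_int l * hs j, snd z) \<notin> N" and "(fst z - cs j) / hs j + 1/2 \<notin> \<int>"
proof -
  show "(fst z + of_int l * hs j, snd z) \<notin> N"
  proof
    assume "(fst z + of_int l * hs j, snd z) \<in> N"
    then have "z \<in> (+) (- of_int l * hs j, 0) ` N"
      by (intro image_eqI[of z _ "(fst z + of_int l * hs j, snd z)"]) simp_all
    then show False
      using assms unfolding exceptional_set_def by blast
  qed
  show "(fst z - cs j) / hs j + 1/2 \<notin> \<int>"
    using assms unfolding exceptional_set_def by blast
qed

lemma eventually_uniform_conv:
  assumes "0 < \<epsilon>"
  obtains j0 where "\<And>j z. j0 \<le> j \<Longrightarrow> 0 \<le> snd z \<Longrightarrow> z \<notin> N \<Longrightarrow> norm (u_h j z - u z) < \<epsilon>"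
  using uniform_conv[OF assms] unfolding eventually_sequentially by blast

text \<open>The limit \<open>u\<close> need not be continuous; its values at the shifted points are controlled
  through a fixed \<open>u_h j0\<close>, which is locally constant in \<open>x\<close> away from its cell interfaces.\<close>
lemma u_h_shift_tendsto:
  assumes z: "z \<notin> exceptional_set" "0 \<le> snd z"
  shows "(\<lambda>j. u_h j (fst z + of_int l * hs j, snd z)) \<longlonglongrightarrow> u z"
proof (rule tendstoI)
  fix e :: real assume "0 < e"
  then obtain j0 where j0: "\<And>j z. j0 \<le> j \<Longrightarrow> 0 \<le> snd z \<Longrightarrow> z \<notin> N \<Longrightarrow> norm (u_h j z - u z) < e/3"
    using eventually_uniform_conv[of "e/3"] by auto
  have "(\<lambda>j. of_int l * hs j) \<longlonglongrightarrow> 0"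
    using tendsto_mult_right_zero[OF h_lim] by simp
  then have "\<forall>\<^sub>F j in sequentially. u_h j0 (fst z + of_int l * hs j, snd z) = u_h j0 z"
    using eventually_piecewise_const_shift_eq[OF h_pos notin_exceptional_set(2)[OF z(1)],
        where ts = "ts j0" and V = "U j0" and t = "snd z"]
    by simp
  moreover have "\<forall>\<^sub>F j in sequentially. j0 \<le> j"
    by (rule eventually_ge_at_top)
  ultimately show "\<forall>\<^sub>F j in sequentially. dist (u_h j (fst z + of_int l * hs j, snd z)) (u z) < e"
  proof eventually_elim
    case (elim j)
    define y where "y = (fst z + of_int l * hs j, snd z)"
    have "y \<notin> N" "z \<notin> N"
      unfolding y_def using notin_exceptional_set(1)[OF z(1), of 0] notin_exceptional_set(1)[OF z(1)] by auto
    then have "norm (u_h j y - u y) < e/3" "norm (u_h j0 y - u y) < e/3" "norm (u_h j0 z - u z) < e/3"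
      using j0[OF elim(2)] j0[OF order_refl] z(2) unfolding y_def by auto
    moreover have "u_h j y - u z = (u_h j y - u y) - (u_h j0 y - u y) + (u_h j0 z - u z)"
      using elim unfolding y_def by simp
    then have "norm (u_h j y - u z) \<le> norm (u_h j y - u y) + norm (u_h j0 y - u y) + norm (u_h j0 z - u z)"
      by (simp only: norm_diff_add_le)
    ultimately show ?case
      unfolding dist_norm y_def[symmetric] by linarith
  qed
qed

lemma eventually_u_h_bounded:
  obtains B where "\<forall>\<^sub>F j in sequentially. \<forall>z. z \<notin> N \<and> \<bar>fst z\<bar> \<le> X \<and> 0 \<le> snd z \<and> snd z \<le> T \<longrightarrow>
    norm (u_h j z) \<le> B"
proof -
  obtain j1 where j1: "\<And>j z. j1 \<le> j \<Longrightarrow> 0 \<le> snd z \<Longrightarrow> z \<notin> N \<Longrightarrow> norm (u_h j z - u z) < 1"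
    using eventually_uniform_conv[of 1] by auto
  obtain M where M: "\<And>z. \<bar>fst z\<bar> \<le> X \<Longrightarrow> snd z \<le> T \<Longrightarrow> norm (u_h j1 z) \<le> M"
    using piecewise_const_bounded[OF h_pos t_unbounded] by blast
  have "norm (u_h j z) \<le> M + 2"
    if "j1 \<le> j" "z \<notin> N" "\<bar>fst z\<bar> \<le> X" "0 \<le> snd z" "snd z \<le> T" for j z
  proof -
    have "u_h j z = (u_h j z - u z) - (u_h j1 z - u z) + u_h j1 z" by simp
    then have "norm (u_h j z) \<le> norm (u_h j z - u z) + norm (u_h j1 z - u z) + norm (u_h j1 z)"
      by (metis norm_diff_add_le)
    moreover have "norm (u_h j z - u z) < 1" "norm (u_h j1 z - u z) < 1"
      using j1 that by auto
    ultimately show ?thesis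
      using M that by fastforce
  qed
  then show thesis
    using that[of "M + 2"] unfolding eventually_sequentially by blast
qed

lemma grid_values_eq_u_h:
  "U j (time_index (ts j) (snd z)) (cell_index (hs j) (cs j) (fst z) + l) = u_h j (fst z + of_int l * hs j, snd z)"
  by (simp add: piecewise_const_shift[OF h_pos])

lemma eventually_grid_values_bounded:
  obtains B where "\<forall>\<^sub>F j in sequentially. \<forall>z l. z \<notin> exceptional_set \<and> \<bar>fst z\<bar> \<le> X \<and> 0 \<le> snd z \<and> snd z \<le> T
    \<and> l \<in> stencil p \<longrightarrow> norm (U j (time_index (ts j) (snd z)) (cell_index (hs j) (cs j) (fst z) + l)) \<le> B"
proof -
  obtain B where B: "\<forall>\<^sub>F j in sequentially. \<forall>z. z \<notin> N \<and> \<bar>fst z\<bar> \<le> X + real p \<and> 0 \<le> snd z \<and> snd z \<le> T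
      \<longrightarrow> norm (u_h j z) \<le> B"
    using eventually_u_h_bounded by blast
  have "\<forall>\<^sub>F j in sequentially. hs j < 1"
    using h_lim by (rule order_tendstoD) simp
  with B have "\<forall>\<^sub>F j in sequentially. \<forall>z l. z \<notin> exceptional_set \<and> \<bar>fst z\<bar> \<le> X \<and> 0 \<le> snd z \<and> snd z \<le> T
      \<and> l \<in> stencil p \<longrightarrow> norm (u_h j (fst z + of_int l * hs j, snd z)) \<le> B"
  proof eventually_elim
    case (elim j)
    have "\<bar>fst z + of_int l * hs j\<bar> \<le> X + real p" if "\<bar>fst z\<bar> \<le> X" "l \<in> stencil p" for z :: "real \<times> real" and l
    proof -
      have "\<bar>of_int l * hs j\<bar> \<le> real p * 1"
        unfolding abs_mult using that(2) h_pos[of j] elim(2)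
        by (intro mult_mono) (auto simp: stencil_def)
      then show ?thesis using that(1) by linarith
    qed
    then show ?case
      using elim(1) notin_exceptional_set(1) by auto
  qed
  then show thesis
    using that unfolding grid_values_eq_u_h by blast
qed

lemma cell_midpoint_tendsto: "(\<lambda>j. midpt (hs j) (cs j) (cell_index (hs j) (cs j) x)) \<longlonglongrightarrow> x"
proof -
  have "norm (midpt (hs j) (cs j) (cell_index (hs j) (cs j) x) - x) \<le> hs j / 2" for j
    using abs_diff_midpt_cell_index_le[OF h_pos] by (simp add: abs_minus_commute)
  then have "(\<lambda>j. midpt (hs j) (cs j) (cell_index (hs j) (cs j) x) - x) \<longlonglongrightarrow> 0"
    by (intro Lim_null_comparison[OF always_eventually tendsto_divide_zero[OF h_lim]] allI)
  then show ?thesis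
    by (simp add: LIM_zero_iff)
qed

lemma next_time_level_tendsto:
  assumes "0 \<le> t"
  shows "(\<lambda>j. ts j (Suc (time_index (ts j) t))) \<longlonglongrightarrow> t"
proof (rule tendstoI)
  fix e :: real assume "0 < e"
  show "\<forall>\<^sub>F j in sequentially. dist (ts j (Suc (time_index (ts j) t))) t < e"
    using dt_lim[OF \<open>0 < e\<close>]
  proof eventually_elim
    case (elim j)
    then show ?case
      using time_index_bounds[OF t_mono t0 t_unbounded assms, of j] elim[rule_format, of "time_index (ts j) t"]
      unfolding dist_real_def by linarith
  qed
qed

context
  fixes \<phi> phx pht :: "real \<times> real \<Rightarrow> real"
  assumes test: "test_function \<phi> phx pht"
begin

abbreviation weak_integrand :: "real \<times> real \<Rightarrow> 'v" where
  "weak_integrand z \<equiv> pht z *\<^sub>R u z + phx z *\<^sub>R f (u z)"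

abbreviation discrete_integrand :: "nat \<Rightarrow> real \<times> real \<Rightarrow> 'v" where
  "discrete_integrand j \<equiv> discrete_weak_integrand phx pht (hs j) (cs j) (ts j) (U j) (\<lambda>n. num_flux p A \<alpha> hh g (U j n))"

lemma discrete_integrand_tendsto:
  assumes z: "z \<notin> exceptional_set"
  shows "(\<lambda>j. discrete_integrand j z) \<longlonglongrightarrow> weak_integrand z"
proof (cases "0 \<le> snd z")
  case False
  obtain \<delta> where "0 < \<delta>" "\<And>x t. pht (x, t) \<noteq> 0 \<Longrightarrow> \<delta> \<le> t" "\<And>x t. phx (x, t) \<noteq> 0 \<Longrightarrow> \<delta> \<le> t"
    using test_function_support[OF test] by metis
  then have "pht z = 0" "phx z = 0"
    using False by (metis not_le order.strict_trans surj_pair snd_conv)+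
  then show ?thesis
    using False unfolding discrete_weak_integrand_def by simp
next
  case True
  define n where "n j = time_index (ts j) (snd z)" for j
  define k where "k j = cell_index (hs j) (cs j) (fst z)" for j
  have stencil_lim: "(\<lambda>j. U j (n j) (k j + l)) \<longlonglongrightarrow> u z" for l
    using u_h_shift_tendsto[OF z True, of l] unfolding n_def k_def grid_values_eq_u_h .
  have flux: "(\<lambda>j. num_flux p A \<alpha> hh g (U j (n j)) (k j)) \<longlonglongrightarrow> f (u z)"
    by (rule num_flux_tendsto[where V = "\<lambda>j. U j (n j)" and k = k, OF hh_cont g_cont hh_cons g_cons A_sum stencil_lim])
  have mid_lim: "(\<lambda>j. (midpt (hs j) (cs j) (k j), snd z)) \<longlonglongrightarrow> (fst z, snd z)"
    unfolding k_def by (intro tendsto_Pair cell_midpoint_tendsto tendsto_const)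
  have right_lim: "(\<lambda>j. (fst z + hs j / 2, ts j (Suc (n j)))) \<longlonglongrightarrow> (fst z, snd z)"
    unfolding n_def using h_lim next_time_level_tendsto[OF True]
    by (intro tendsto_Pair) (auto intro!: tendsto_eq_intros)
  have pht_cont: "continuous_on UNIV pht" and phx_cont: "continuous_on UNIV phx"
    using test unfolding test_function_def by blast+
  have "(\<lambda>j. pht (midpt (hs j) (cs j) (k j), snd z)) \<longlonglongrightarrow> pht z"
    "(\<lambda>j. phx (fst z + hs j / 2, ts j (Suc (n j)))) \<longlonglongrightarrow> phx z"
    using continuous_on_tendsto_compose[OF pht_cont mid_lim] continuous_on_tendsto_compose[OF phx_cont right_lim]
    by simp_all
  then have "(\<lambda>j. pht (midpt (hs j) (cs j) (k j), snd z) *\<^sub>R U j (n j) (k j)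
      + phx (fst z + hs j / 2, ts j (Suc (n j))) *\<^sub>R num_flux p A \<alpha> hh g (U j (n j)) (k j))
      \<longlonglongrightarrow> weak_integrand z"
    using stencil_lim[of 0] flux by (intro tendsto_add tendsto_scaleR) simp_all
  then show ?thesis
    using True unfolding discrete_weak_integrand_def n_def k_def by simp
qed

lemma discrete_integrand_eq_0_outside:
  assumes supp_t: "\<And>x t. pht (x, t) \<noteq> 0 \<Longrightarrow> \<bar>x\<bar> \<le> R \<and> t \<le> T"
    and supp_x: "\<And>x t. phx (x, t) \<noteq> 0 \<Longrightarrow> \<bar>x\<bar> \<le> R \<and> t \<le> T"
    and h: "hs j < 1/2" and out: "z \<notin> cbox (- (R + 1), 0) (R + 1, T)"
  shows "discrete_integrand j z = 0"
proof (cases "0 \<le> snd z")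
  case True
  have "R + hs j < \<bar>midpt (hs j) (cs j) (cell_index (hs j) (cs j) (fst z))\<bar>" if "R + 1 < \<bar>fst z\<bar>"
    using abs_diff_midpt_cell_index_le[OF h_pos[of j], where x = "fst z" and c = "cs j"] that h by linarith
  moreover have "R + 1 < \<bar>fst z\<bar> \<or> T < snd z"
    using out True by (cases z) auto
  ultimately show ?thesis
    using discrete_weak_integrand_eq_0[OF h_pos t_mono t0 t_unbounded supp_t supp_x True] by blast
qed (simp add: discrete_weak_integrand_def)

lemma eventually_discrete_integrand_bounded:
  obtains C where "\<forall>\<^sub>F j in sequentially. \<forall>z. z \<notin> exceptional_set \<and> \<bar>fst z\<bar> \<le> X \<and> 0 \<le> snd z \<and> snd z \<le> T
    \<longrightarrow> norm (discrete_integrand j z) \<le> C"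
proof -
  obtain P where Pt: "\<And>z. \<bar>pht z\<bar> \<le> P" and Px: "\<And>z. \<bar>phx z\<bar> \<le> P"
    using test_function_bounded_derivatives[OF test] by blast
  obtain B where B: "\<forall>\<^sub>F j in sequentially. \<forall>z l. z \<notin> exceptional_set \<and> \<bar>fst z\<bar> \<le> X \<and> 0 \<le> snd z
      \<and> snd z \<le> T \<and> l \<in> stencil p \<longrightarrow> norm (U j (time_index (ts j) (snd z)) (cell_index (hs j) (cs j) (fst z) + l)) \<le> B"
    using eventually_grid_values_bounded by blast
  obtain CF where CF: "\<And>V k. (\<And>l. l \<in> stencil p \<Longrightarrow> norm (V (k + l)) \<le> B) \<Longrightarrow> norm (num_flux p A \<alpha> hh g V k) \<le> CF"
    using num_flux_bounded[OF hh_cont g_cont] by blast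
  have "0 \<in> stencil p"
    using p_pos by (simp add: stencil_def)
  from B have "\<forall>\<^sub>F j in sequentially. \<forall>z. z \<notin> exceptional_set \<and> \<bar>fst z\<bar> \<le> X \<and> 0 \<le> snd z \<and> snd z \<le> T
      \<longrightarrow> norm (discrete_integrand j z) \<le> P * B + P * CF"
  proof eventually_elim
    case (elim j)
    show ?case
    proof (intro allI impI)
      fix z assume z: "z \<notin> exceptional_set \<and> \<bar>fst z\<bar> \<le> X \<and> 0 \<le> snd z \<and> snd z \<le> T"
      define n where "n = time_index (ts j) (snd z)"
      define k where "k = cell_index (hs j) (cs j) (fst z)"
      have "norm (U j n (k + l)) \<le> B" if "l \<in> stencil p" for l
        using elim z that unfolding n_def k_def by blast
      then have "norm (U j n k) \<le> B" "norm (num_flux p A \<alpha> hh g (U j n) k) \<le> CF"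
        using \<open>0 \<in> stencil p\<close> CF by (metis add_0_right, blast)
      then show "norm (discrete_integrand j z) \<le> P * B + P * CF"
        using z Pt Px unfolding discrete_weak_integrand_def n_def k_def
        by (auto intro!: order_trans[OF norm_triangle_ineq] add_mono mult_mono order_trans[OF abs_ge_zero Pt])
    qed
  qed
  then show thesis
    using that by blast
qed

lemma discrete_integrand_dominated:
  obtains C a b where "\<forall>\<^sub>F j in sequentially. \<forall>z. z \<notin> exceptional_set \<longrightarrow>
    norm (discrete_integrand j z) \<le> C * indicator (cbox a b) z"
proof -
  obtain R \<delta> T where supp_t: "\<And>x t. pht (x, t) \<noteq> 0 \<Longrightarrow> \<bar>x\<bar> \<le> R \<and> \<delta> \<le> t \<and> t \<le> T"
    and supp_x: "\<And>x t. phx (x, t) \<noteq> 0 \<Longrightarrow> \<bar>x\<bar> \<le> R \<and> \<delta> \<le> t \<and> t \<le> T"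
    using test_function_support[OF test] by metis
  obtain C where C: "\<forall>\<^sub>F j in sequentially. \<forall>z. z \<notin> exceptional_set \<and> \<bar>fst z\<bar> \<le> R + 1 \<and> 0 \<le> snd z
      \<and> snd z \<le> T \<longrightarrow> norm (discrete_integrand j z) \<le> C"
    using eventually_discrete_integrand_bounded by blast
  have "\<forall>\<^sub>F j in sequentially. hs j < 1/2"
    using h_lim by (rule order_tendstoD) simp
  with C have "\<forall>\<^sub>F j in sequentially. \<forall>z. z \<notin> exceptional_set \<longrightarrow>
      norm (discrete_integrand j z) \<le> C * indicator (cbox (- (R + 1), 0) (R + 1, T)) z"
  proof eventually_elim
    case (elim j)
    show ?case
    proof (intro allI impI)
      fix z assume z: "z \<notin> exceptional_set"
      show "norm (discrete_integrand j z) \<le> C * indicator (cbox (- (R + 1), 0) (R + 1, T)) z"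
      proof (cases "z \<in> cbox (- (R + 1), 0) (R + 1, T)")
        case True
        then show ?thesis
          using elim(1) z by (cases z) auto
      next
        case False
        then show ?thesis
          using discrete_integrand_eq_0_outside[of R T, OF _ _ elim(2)] supp_t supp_x by auto
      qed
    qed
  qed
  then show thesis
    using that by blast
qed

lemma weak_integrand_integral_eq_0:
  "integrable lebesgue weak_integrand \<and> integral\<^sup>L lebesgue weak_integrand = 0"
proof -
  obtain C a b where dominated: "\<forall>\<^sub>F j in sequentially. \<forall>z. z \<notin> exceptional_set \<longrightarrow>
      norm (discrete_integrand j z) \<le> C * indicator (cbox a b) z"
    using discrete_integrand_dominated by blast
  have discrete: "has_bochner_integral lebesgue (discrete_integrand j) 0" for j
    by (rule has_bochner_integral_discrete_weak_integrand[OF test h_pos t_mono t0 t_unbounded]) (rule scheme)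
  then have meas: "discrete_integrand j \<in> borel_measurable lebesgue" for j
    by (simp add: has_bochner_integral_iff borel_measurable_integrable)
  have lim: "AE z in lebesgue. (\<lambda>j. discrete_integrand j z) \<longlonglongrightarrow> weak_integrand z"
    using discrete_integrand_tendsto by (intro AE_I'[OF exceptional_set_null]) blast
  have "weak_integrand \<in> borel_measurable lebesgue"
  proof (rule borel_measurable_AE)
    show "(\<lambda>z. lim (\<lambda>j. discrete_integrand j z)) \<in> borel_measurable lebesgue"
      using meas by (rule borel_measurable_lim_metric)
    show "AE z in lebesgue. lim (\<lambda>j. discrete_integrand j z) = weak_integrand z"
      using lim by eventually_elim (rule limI)
  qed
  moreover have "integrable lebesgue (\<lambda>z. C * indicator (cbox a b) z)"
    using emeasure_lborel_cbox_finite[of a b]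
    by (intro integrable_mult_right integrable_real_indicator) auto
  moreover have "\<forall>\<^sub>F j in sequentially. AE z in lebesgue. norm (discrete_integrand j z) \<le> C * indicator (cbox a b) z"
    using dominated by eventually_elim (rule AE_I'[OF exceptional_set_null], blast)
  ultimately have "integrable lebesgue weak_integrand"
    and "(\<lambda>j. integral\<^sup>L lebesgue (discrete_integrand j)) \<longlonglongrightarrow> integral\<^sup>L lebesgue weak_integrand"
    using integrable_dominated_convergence_eventually[OF _ meas _ lim]
      integral_dominated_convergence_eventually[OF _ meas _ lim] by blast+
  moreover have "integral\<^sup>L lebesgue (discrete_integrand j) = 0" for j
    using discrete by (simp add: has_bochner_integral_iff)
  ultimately show ?thesis
    by (simp add: LIMSEQ_const_iff)
qed

end

end

theorem mainTheorem5:
  fixes f :: "real^'n \<Rightarrow> real^'n"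
    and hh g :: "real^'n \<Rightarrow> real^'n \<Rightarrow> real^'n"
    and p :: nat and A :: "int \<Rightarrow> int \<Rightarrow> real" and \<alpha> :: real
    and hs cs :: "nat \<Rightarrow> real" and ts :: "nat \<Rightarrow> nat \<Rightarrow> real"
    and U :: "nat \<Rightarrow> nat \<Rightarrow> int \<Rightarrow> real^'n"
    and u :: "real \<times> real \<Rightarrow> real^'n"
  assumes p: "p \<ge> 1"
    and A_diag: "\<forall>l\<in>stencil p. A l l = 0"
    and A_sum: "(\<Sum>l\<in>stencil p. \<Sum>m\<in>stencil p. A l m) = 1"
    and alpha: "0 \<le> \<alpha>" "\<alpha> \<le> 1"
    and hh_cons: "\<forall>a. hh a a = f a"
    and g_cons: "\<forall>a. g a a = f a"
    and hh_lip: "\<exists>L. L-lipschitz_on UNIV (\<lambda>(a, b). hh a b)"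
    and g_lip: "\<exists>L. L-lipschitz_on UNIV (\<lambda>(a, b). g a b)"
    and h_pos: "\<forall>j. hs j > 0"
    and h_lim: "hs \<longlonglongrightarrow> 0"
    and t0: "\<forall>j. ts j 0 = 0"
    and t_mono: "\<forall>j n. ts j n < ts j (Suc n)"
    and t_unbounded: "\<forall>j. filterlim (ts j) at_top sequentially"
    and dt_lim: "\<forall>\<epsilon>>0. \<forall>\<^sub>F j in sequentially. \<forall>n. ts j (Suc n) - ts j n < \<epsilon>"
    and scheme: "\<forall>j n k. U j (Suc n) k =
        U j n k + ((ts j (Suc n) - ts j n) / hs j) *\<^sub>R
          (num_flux p A \<alpha> hh g (U j n) (k - 1) - num_flux p A \<alpha> hh g (U j n) k)"
    and osc: "\<forall>n. (\<forall>\<^sub>F j in sequentially.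
                   (\<lambda>k. local_osc p (hs j) (cs j) (ts j) (U j) n k) summable_on UNIV) \<and>
               ((\<lambda>j. hs j * infsum (\<lambda>k. local_osc p (hs j) (cs j) (ts j) (U j) n k) UNIV)
                  \<longlonglongrightarrow> 0)"
    and conv: "\<exists>N\<in>null_sets lebesgue. \<forall>\<epsilon>>0. \<forall>\<^sub>F j in sequentially. \<forall>z.
                 snd z \<ge> 0 \<and> z \<notin> N \<longrightarrow>
                 norm (piecewise_const (hs j) (cs j) (ts j) (U j) z - u z) < \<epsilon>"
  shows "weak_solution f u"
proof -
  obtain Lh Lg where "Lh-lipschitz_on UNIV (\<lambda>(a, b). hh a b)" "Lg-lipschitz_on UNIV (\<lambda>(a, b). g a b)"
    using hh_lip g_lip by blast
  then have "continuous_on UNIV (\<lambda>(a, b). hh a b)" "continuous_on UNIV (\<lambda>(a, b). g a b)"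
    by (auto intro: lipschitz_on_continuous_on)
  moreover obtain N where "N \<in> null_sets lebesgue" and "\<And>\<epsilon>. 0 < \<epsilon> \<Longrightarrow> \<forall>\<^sub>F j in sequentially. \<forall>z.
      0 \<le> snd z \<and> z \<notin> N \<longrightarrow> norm (piecewise_const (hs j) (cs j) (ts j) (U j) z - u z) < \<epsilon>"
    using conv by blast
  ultimately interpret lax_wendroff_convergence f hh g p A \<alpha> hs cs ts U u N
    using p A_sum hh_cons g_cons h_pos h_lim t_mono t0 t_unbounded dt_lim scheme
    by unfold_locales (auto simp: strict_mono_Suc_iff)
  show ?thesis
    unfolding weak_solution_def using weak_integrand_integral_eq_0 by blast
qed

end
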